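(* Let $s\in\tfrac12\mathbb{Z}_{>0}$, $a_j(u)=\sinh[u+(2s+1-j)\lambda]$, $b_j(\lambda)=\sqrt{\sinh(j\lambda)\sinh[\lambda(2s+1-j)]}$ (so $b_0=b_{2s+1}=0$), $q=e^\lambda$, $[n]=\sinh(n\lambda)/\sinh\lambda$, $[n]!=[n]\cdots[1]$, $[0]!=1$, $\left[\begin{array}{c}m\\k\end{array}\right]=\frac{[m]!}{[m-k]![k]!}$, and $$f^{(p)}(\sigma;u)=\sum_{k=0}^p(-e^{2\lambda\sigma})^k\left[\begin{array}{c}p\\k\end{array}\right]\prod_{j=1}^k\sinh[u+(j-1)\lambda]\prod_{j=k+1}^p\sinh[u+(2s+j-p)\lambda].$$ Let $\sigma\in\{-s,-s+1,\ldots,s\}$. Then, with $h^{\rm out}_1,h^{\rm out}_2,h^{\rm in}_1$ and $v^{\rm in}_1,v^{\rm out}_1$ arbitrary, the choices $$h^{\rm in}_2=\frac{h^{\rm in}_1h^{\rm out}_2}{h^{\rm out}_1}e^{2\lambda\sigma},\qquad v^{\rm out}_j=a_1(u)\frac{h^{\rm in}_1v^{\rm in}_j}{h^{\rm out}_1}\frac{f^{(j-1)}(\sigma;u-\lambda)}{f^{(j-1)}(\sigma;u)},\qquad v^{\rm in}_{j+1}=\frac{1}{b_j(\lambda)}\frac{v^{\rm in}_jh^{\rm out}_2}{h^{\rm out}_1}\frac{f^{(j)}(\sigma;u)}{f^{(j-1)}(\sigma;u)}$$ solve the system, for $j=1,\ldots,2s+1$, $$a_j(u)v^{\rm in}_jh^{\rm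 in}_1+b_{j-1}(\lambda)v^{\rm in}_{j-1}h^{\rm in}_2=v^{\rm out}_jh^{\rm out}_1,$$ $$a_{2s+2-j}(u)v^{\rm in}_jh^{\rm in}_2+b_j(\lambda)v^{\rm in}_{j+1}h^{\rm in}_1=v^{\rm out}_jh^{\rm out}_2.$$ In other words, the $R$-matrix $R^{(1,2s)}(u)$ has the property of pair-propagation through a vertex: $R(u)_{\mu\alpha}^{\nu\beta}v^{\rm in}_\beta h^{\rm in}_\nu=v^{\rm out}_\alpha h^{\rm out}_\mu$.
   Context: $R^{(1,2s)}(u)$ acts on $\mathbb{C}^2\otimes\mathbb{C}^{2s+1}$ with non-zero entries $R_{1j}^{1j}=a_j(u)$, $R_{2j}^{2j}=a_{2s+2-j}(u)$, $R_{1\,j+1}^{2\,j}=R_{2\,j}^{1\,j+1}=b_j(\lambda)$. Pair-propagation means existence of vectors $h^{\rm in},h^{\rm out}\in\mathbb{C}^2$, $v^{\rm in},v^{\rm out}\in\mathbb{C}^{2s+1}$ with $R(u)_{\mu\alpha}^{\nu\beta}v^{\rm in}_\beta h^{\rm in}_\nu=v^{\rm out}_\alpha h^{\rm out}_\mu$, which written out is the displayed system (terms with $b_0$ or $b_{2s+1}$ vanish). *)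

theory Defs
  imports Complex_Main
begin

(* Convention: the spin s is encoded by n = 2s (a positive natural number);
   lam is the crossing parameter lambda, u the spectral parameter. *)

definition a_coef :: "nat \<Rightarrow> complex \<Rightarrow> complex \<Rightarrow> nat \<Rightarrow> complex" where
  "a_coef n lam u j = sinh (u + (of_nat n + 1 - of_nat j) * lam)"

definition b_coef :: "nat \<Rightarrow> complex \<Rightarrow> nat \<Rightarrow> complex" where
  "b_coef n lam j = csqrt (sinh (of_nat j * lam) * sinh (lam * (of_nat n + 1 - of_nat j)))"

definition qnum :: "complex \<Rightarrow> nat \<Rightarrow> complex" where
  "qnum lam k = sinh (of_nat k * lam) / sinh lam"

definition qfact :: "complex \<Rightarrow> nat \<Rightarrow> complex" where
  "qfact lam k = (\<Prod>i = 1..k. qnum lam i)"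

definition qbinom :: "complex \<Rightarrow> nat \<Rightarrow> nat \<Rightarrow> complex" where
  "qbinom lam m k = qfact lam m / (qfact lam (m - k) * qfact lam k)"

definition f_poly :: "nat \<Rightarrow> complex \<Rightarrow> nat \<Rightarrow> complex \<Rightarrow> complex \<Rightarrow> complex" where
  "f_poly n lam p sigma u =
     (\<Sum>k = 0..p. (- exp (2 * lam * sigma)) ^ k * qbinom lam p k
        * (\<Prod>j = 1..k. sinh (u + (of_nat j - 1) * lam))
        * (\<Prod>j = k + 1..p. sinh (u + (of_nat n + of_nat j - of_nat p) * lam)))"

end

theory Submission
  imports Defs
begin

(* After substituting h_in2, v_out and the recursion for v_in, the two equations at site j
   become three-term identities for the polynomials f^(p)(sigma;u), where n = 2s and
   m = sigma + s.  The first equation is a contiguity relation between f^(p)(u), f^(p-1)(u) and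
   f^(p)(u - lambda); the second expresses f^(p+1)(u) through f^(p)(u) and f^(p)(u - lambda);
   at the last site j = n + 1 the second equation reduces to the quasi-periodicity
   f^(n)(sigma;u - lambda) = e^(2 lambda sigma) f^(n)(sigma;u).  The two contiguity relations
   are checked term by term, using q-Pascal type identities for q-binomials weighted by sinh.
   Quasi-periodicity holds because for sigma in {-s, ..., s} the function f^(n)(sigma;u) is a
   constant multiple of e^(-2 sigma u); this follows by induction on n from a recursion of the
   diagonal polynomials f^(n) in n, in which sigma is shifted by 1/2. *)

lemma sum_atLeast0_atMost_Suc_shift_combine:
  fixes a b c :: "nat \<Rightarrow> 'a::comm_monoid_add"
  assumes "a 0 = c 0" and "\<And>k. k \<le> M \<Longrightarrow> a (Suc k) + b k = c (Suc k)"
  shows "(\<Sum>k = 0..Suc M. a k) + (\<Sum>k = 0..M. b k) = (\<Sum>k = 0..Suc M. c k)"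
proof -
  have "(\<Sum>k = 0..Suc M. a k) + (\<Sum>k = 0..M. b k) = a 0 + (\<Sum>k = 0..M. a (Suc k) + b k)"
    by (simp only: sum.atLeast0_atMost_Suc_shift comp_def sum.distrib add.assoc)
  also have "\<dots> = c 0 + (\<Sum>k = 0..M. c (Suc k))"
    using assms by simp
  also have "\<dots> = (\<Sum>k = 0..Suc M. c k)"
    by (simp only: sum.atLeast0_atMost_Suc_shift comp_def)
  finally show ?thesis .
qed

lemma minus_mult_power: "(- (a * b)) ^ n = (- a) ^ n * (b::'a::comm_ring_1) ^ n"
  by (metis minus_mult_left power_mult_distrib)

lemma sinh_eq_exp: "sinh (x::complex) = (exp x - inverse (exp x)) / 2"
  by (simp add: sinh_def exp_minus scaleR_conv_of_real field_simps)

lemma sinh_add_exp: "sinh (a + b) = exp a * sinh b + sinh a / exp (b::complex)"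
  by (simp add: sinh_eq_exp exp_add field_simps)

lemma sinh_add_mult_sinh_add:
  "sinh (w + a) * sinh (w + b) = sinh w * sinh (w + a + b) + sinh a * sinh (b::complex)"
  by (simp add: sinh_eq_exp exp_add field_simps)

section \<open>q-binomial coefficients\<close>

definition sinh_nonzero_upto :: "complex \<Rightarrow> nat \<Rightarrow> bool" where
  "sinh_nonzero_upto lam N \<longleftrightarrow> (\<forall>j \<in> {1..N}. sinh (of_nat j * lam) \<noteq> 0)"

lemma sinh_nonzero_upto_mono:
  "sinh_nonzero_upto lam N \<Longrightarrow> M \<le> N \<Longrightarrow> sinh_nonzero_upto lam M"
  unfolding sinh_nonzero_upto_def by auto

lemma sinh_nonzero_uptoD:
  "sinh_nonzero_upto lam N \<Longrightarrow> 1 \<le> j \<Longrightarrow> j \<le> N \<Longrightarrow> sinh (of_nat j * lam) \<noteq> 0"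
  unfolding sinh_nonzero_upto_def by auto

lemma qnum_nonzero:
  assumes "sinh_nonzero_upto lam N" "1 \<le> i" "i \<le> N"
  shows "qnum lam i \<noteq> 0"
  using sinh_nonzero_uptoD[OF assms] sinh_nonzero_uptoD[OF assms(1), of 1] assms(2,3)
  by (simp add: qnum_def)

lemma qfact_Suc: "qfact lam (Suc k) = qfact lam k * qnum lam (Suc k)"
  by (simp add: qfact_def)

lemma qfact_nonzero: "sinh_nonzero_upto lam N \<Longrightarrow> k \<le> N \<Longrightarrow> qfact lam k \<noteq> 0"
  by (induction k) (auto simp: qfact_def qfact_Suc qnum_nonzero)

lemma qbinom_0_right: "sinh_nonzero_upto lam p \<Longrightarrow> qbinom lam p 0 = 1"
  using qfact_nonzero[of lam p p] by (simp add: qbinom_def qfact_def[of lam 0])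

lemma qbinom_self: "sinh_nonzero_upto lam p \<Longrightarrow> qbinom lam p p = 1"
  using qfact_nonzero[of lam p p] by (simp add: qbinom_def qfact_def[of lam 0])

lemma qbinom_mult_qnum_diff:
  assumes "sinh_nonzero_upto lam p" "k < p"
  shows "qbinom lam p k * qnum lam (p - k) = qbinom lam p (Suc k) * qnum lam (Suc k)"
proof -
  have d: "p - k = Suc (p - Suc k)" using assms by simp
  have "qfact lam (p - Suc k) \<noteq> 0" "qfact lam k \<noteq> 0"
    and "qnum lam (p - k) \<noteq> 0" "qnum lam (Suc k) \<noteq> 0"
    using qfact_nonzero[OF assms(1)] qnum_nonzero[OF assms(1)] assms(2) by auto
  then show ?thesis unfolding qbinom_def d qfact_Suc by (simp add: d field_simps)
qed

lemma qbinom_Suc_Suc_mult_qnum_diff: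
  assumes "sinh_nonzero_upto lam p" "k < p"
  shows "qbinom lam (Suc p) (Suc k) * qnum lam (p - k) = qbinom lam p (Suc k) * qnum lam (Suc p)"
proof -
  have d: "p - k = Suc (p - Suc k)" using assms by simp
  have "qfact lam (p - Suc k) \<noteq> 0" "qfact lam k \<noteq> 0"
    and "qnum lam (p - k) \<noteq> 0" "qnum lam (Suc k) \<noteq> 0"
    using qfact_nonzero[OF assms(1)] qnum_nonzero[OF assms(1)] assms(2) by auto
  then show ?thesis unfolding qbinom_def d qfact_Suc diff_Suc_Suc by (simp add: d field_simps)
qed

lemma qbinom_mult_qnum_Suc:
  assumes "sinh_nonzero_upto lam (Suc p)" "k \<le> p"
  shows "qbinom lam p k * qnum lam (Suc p) = qbinom lam (Suc p) (Suc k) * qnum lam (Suc k)"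
proof -
  have "qfact lam (p - k) \<noteq> 0" "qfact lam k \<noteq> 0" "qnum lam (Suc k) \<noteq> 0"
    using qfact_nonzero[OF assms(1)] qnum_nonzero[OF assms(1)] assms(2) by auto
  then show ?thesis unfolding qbinom_def qfact_Suc diff_Suc_Suc by (simp add: field_simps)
qed

lemma qbinom_pascal:
  assumes "sinh_nonzero_upto lam n" "k < n" and w: "w = exp lam \<or> w = inverse (exp lam)"
  shows "qbinom lam (Suc n) (Suc k) = w ^ Suc k * qbinom lam n (Suc k) + qbinom lam n k / w ^ (n - k)"
proof -
  have d: "n - k = Suc (n - Suc k)" using assms by simp
  have nz: "qfact lam (n - Suc k) \<noteq> 0" "qfact lam k \<noteq> 0" "qnum lam (n - k) \<noteq> 0"
      "qnum lam (Suc k) \<noteq> 0" "qfact lam n \<noteq> 0" "w \<noteq> 0"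
    using qfact_nonzero[OF assms(1)] qnum_nonzero[OF assms(1)] assms(2) w by auto
  have split: "of_nat (Suc n) * lam = of_nat (Suc k) * lam + of_nat (n - k) * lam"
    using assms(2) by (simp add: algebra_simps)
  have "sinh (of_nat (Suc n) * lam)
      = w ^ Suc k * sinh (of_nat (n - k) * lam) + sinh (of_nat (Suc k) * lam) / w ^ (n - k)"
    using w
  proof
    assume "w = exp lam"
    then show ?thesis unfolding split sinh_add_exp exp_of_nat_mult by simp
  next
    assume w_inv: "w = inverse (exp lam)"
    show ?thesis
      unfolding split add.commute[of "of_nat (Suc k) * lam"] sinh_add_exp exp_of_nat_mult w_inv
      by (simp add: field_simps)
  qed
  then have qnum_Suc: "qnum lam (Suc n)
      = w ^ Suc k * qnum lam (Suc (n - Suc k)) + qnum lam (Suc k) / w ^ Suc (n - Suc k)"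
    unfolding qnum_def d[symmetric] by (simp add: add_divide_distrib)
  show ?thesis unfolding qbinom_def d qfact_Suc diff_Suc_Suc qnum_Suc using nz d
    by (simp add: field_simps)
qed

lemma qbinom_sinh_pascal:
  assumes "sinh_nonzero_upto lam p" "j < p"
  shows "qbinom lam (Suc p) (Suc j) * sinh (u + of_nat j * lam)
      - qbinom lam p j * sinh (u + of_nat p * lam)
    = qbinom lam p (Suc j) * sinh (u - lam)"
proof -
  obtain d where p: "p = j + d" using assms(2) by (metis less_imp_add_positive)
  have "sinh (of_nat (Suc p) * lam) * sinh (u + of_nat j * lam)
      - sinh (of_nat (Suc j) * lam) * sinh (u + of_nat p * lam)
      = sinh (of_nat (p - j) * lam) * sinh (u - lam)"
    using sinh_add_mult_sinh_add[of "of_nat (Suc j) * lam" "of_nat d * lam" "u - lam"]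
    unfolding p by (simp add: algebra_simps)
  then have sinh_qnum: "qnum lam (Suc p) * sinh (u + of_nat j * lam)
      - qnum lam (Suc j) * sinh (u + of_nat p * lam) = qnum lam (p - j) * sinh (u - lam)"
    unfolding qnum_def by (metis diff_divide_distrib times_divide_eq_left)
  have "(qbinom lam (Suc p) (Suc j) * sinh (u + of_nat j * lam)
        - qbinom lam p j * sinh (u + of_nat p * lam)) * qnum lam (p - j)
      = qbinom lam (Suc p) (Suc j) * qnum lam (p - j) * sinh (u + of_nat j * lam)
        - qbinom lam p j * qnum lam (p - j) * sinh (u + of_nat p * lam)"
    by (simp add: algebra_simps)
  also have "\<dots> = qbinom lam p (Suc j)
      * (qnum lam (Suc p) * sinh (u + of_nat j * lam) - qnum lam (Suc j) * sinh (u + of_nat p * lam))"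
    unfolding qbinom_mult_qnum_diff[OF assms] qbinom_Suc_Suc_mult_qnum_diff[OF assms]
    by (simp add: algebra_simps)
  also have "\<dots> = qbinom lam p (Suc j) * sinh (u - lam) * qnum lam (p - j)"
    unfolding sinh_qnum by simp
  finally show ?thesis
    using qnum_nonzero[OF assms(1), of "p - j"] assms(2) by simp
qed

lemma qbinom_sinh_absorb:
  assumes "sinh_nonzero_upto lam (Suc p)" "j \<le> p"
  shows "qbinom lam (Suc p) (Suc j)
      * (sinh (u + (of_nat n - of_nat (Suc p)) * lam) * sinh (u + of_nat j * lam)
         - sinh (u - lam) * sinh (u + (of_nat n + of_nat (Suc j) - of_nat (Suc p)) * lam))
    = sinh (of_nat (Suc p) * lam) * sinh ((of_nat n - of_nat p) * lam) * qbinom lam p j"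
proof -
  have "sinh lam \<noteq> 0"
    using sinh_nonzero_uptoD[OF assms(1), of 1] by simp
  then have absorb: "qbinom lam p j * sinh (of_nat (Suc p) * lam)
      = qbinom lam (Suc p) (Suc j) * sinh (of_nat (Suc j) * lam)"
    using qbinom_mult_qnum_Suc[OF assms] by (simp add: qnum_def field_simps)
  have "sinh (u + (of_nat n - of_nat (Suc p)) * lam) * sinh (u + of_nat j * lam)
      - sinh (u - lam) * sinh (u + (of_nat n + of_nat (Suc j) - of_nat (Suc p)) * lam)
      = sinh ((of_nat n - of_nat p) * lam) * sinh (of_nat (Suc j) * lam)"
    using sinh_add_mult_sinh_add[of "u - lam" "(of_nat n - of_nat p) * lam" "of_nat (Suc j) * lam"]
    by (simp add: algebra_simps)
  then show ?thesis using absorb by (simp add: algebra_simps)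
qed

section \<open>The polynomials f^(p)\<close>

definition head_prod :: "complex \<Rightarrow> complex \<Rightarrow> nat \<Rightarrow> complex" where
  "head_prod lam u k = (\<Prod>j = 1..k. sinh (u + (of_nat j - 1) * lam))"

definition tail_prod :: "nat \<Rightarrow> complex \<Rightarrow> nat \<Rightarrow> complex \<Rightarrow> nat \<Rightarrow> complex" where
  "tail_prod n lam p u k = (\<Prod>j = k + 1..p. sinh (u + (of_nat n + of_nat j - of_nat p) * lam))"

lemma head_prod_0 [simp]: "head_prod lam u 0 = 1"
  by (simp add: head_prod_def)

lemma head_prod_Suc: "head_prod lam u (Suc k) = head_prod lam u k * sinh (u + of_nat k * lam)"
  by (simp add: head_prod_def)

lemma head_prod_Suc_shift: "head_prod lam u (Suc k) = sinh u * head_prod lam (u + lam) k"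
  by (induction k) (simp_all add: head_prod_Suc algebra_simps)

lemma tail_prod_self [simp]: "tail_prod n lam p u p = 1"
  by (simp add: tail_prod_def)

lemma tail_prod_Suc_Suc: "tail_prod n lam (Suc p) u (Suc k) = tail_prod n lam p u k"
  unfolding tail_prod_def Suc_eq_plus1[symmetric]
  by (subst prod.shift_bounds_cl_Suc_ivl) (simp add: algebra_simps del: prod.cl_ivl_Suc)

lemma tail_prod_Suc_top:
  assumes "k \<le> p"
  shows "tail_prod n lam (Suc p) u k = tail_prod n lam p (u - lam) k * sinh (u + of_nat n * lam)"
proof -
  have "tail_prod n lam (Suc p) u k
      = (\<Prod>j = k + 1..p. sinh (u + (of_nat n + of_nat j - of_nat (Suc p)) * lam))
        * sinh (u + of_nat n * lam)"
    unfolding tail_prod_def using assms by simp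
  also have "(\<Prod>j = k + 1..p. sinh (u + (of_nat n + of_nat j - of_nat (Suc p)) * lam))
      = tail_prod n lam p (u - lam) k"
    unfolding tail_prod_def by (rule prod.cong) (simp_all add: algebra_simps)
  finally show ?thesis .
qed

lemma tail_prod_Suc_bot:
  assumes "k \<le> p"
  shows "tail_prod n lam (Suc p) u k
    = sinh (u + (of_nat n + of_nat k - of_nat p) * lam) * tail_prod n lam p u k"
proof -
  have "tail_prod n lam (Suc p) u k = sinh (u + (of_nat n + of_nat (Suc k) - of_nat (Suc p)) * lam)
      * tail_prod n lam (Suc p) u (Suc k)"
    unfolding tail_prod_def using assms by (subst prod.atLeast_Suc_atMost) auto
  then show ?thesis by (simp add: tail_prod_Suc_Suc algebra_simps)
qed

lemma tail_prod_Suc_shift: "tail_prod (Suc n) lam p (u - lam) k = tail_prod n lam p u k"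
  unfolding tail_prod_def by (rule prod.cong) (simp_all add: algebra_simps)

lemma tail_prod_Suc_diag:
  "k \<le> N \<Longrightarrow>
    tail_prod (Suc N) lam (Suc N) u k = tail_prod N lam N u k * sinh (u + of_nat (Suc N) * lam)"
  using tail_prod_Suc_top[of k N "Suc N" lam u] by (simp add: tail_prod_Suc_shift)

lemma tail_prod_Suc_diag_Suc:
  "tail_prod (Suc N) lam (Suc N) u (Suc k) = tail_prod N lam N (u + lam) k"
  using tail_prod_Suc_shift[of N lam N "u + lam" k] by (simp add: tail_prod_Suc_Suc)

definition f_term :: "nat \<Rightarrow> complex \<Rightarrow> nat \<Rightarrow> complex \<Rightarrow> complex \<Rightarrow> nat \<Rightarrow> complex" where
  "f_term n lam p x u k = (- x) ^ k * qbinom lam p k * head_prod lam u k * tail_prod n lam p u k"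

(* f^(p)(sigma;u) with e^(2 lambda sigma) replaced by a free variable x, since the recursion in
   the spin (f_poly_x_diag_Suc) rescales x. *)
definition f_poly_x :: "nat \<Rightarrow> complex \<Rightarrow> nat \<Rightarrow> complex \<Rightarrow> complex \<Rightarrow> complex" where
  "f_poly_x n lam p x u = (\<Sum>k = 0..p. f_term n lam p x u k)"

lemma f_poly_eq_f_poly_x: "f_poly n lam p sigma u = f_poly_x n lam p (exp (2 * lam * sigma)) u"
  by (simp add: f_poly_def f_poly_x_def f_term_def head_prod_def tail_prod_def)

lemma f_term_Suc_contiguity:
  assumes "sinh_nonzero_upto lam p" "k < p"
  shows "f_term n lam (Suc p) x u (Suc k) + x * sinh (u + of_nat p * lam) * f_term n lam p x u k
    = sinh (u + of_nat n * lam) * f_term n lam p x (u - lam) (Suc k)"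
proof -
  have "f_term n lam (Suc p) x u (Suc k) + x * sinh (u + of_nat p * lam) * f_term n lam p x u k
      = - ((- x) ^ k * x * head_prod lam u k * tail_prod n lam p u k)
        * (qbinom lam (Suc p) (Suc k) * sinh (u + of_nat k * lam)
           - qbinom lam p k * sinh (u + of_nat p * lam))"
    by (simp add: f_term_def head_prod_Suc tail_prod_Suc_Suc algebra_simps)
  also have "\<dots> = - ((- x) ^ k * x * head_prod lam u k * tail_prod n lam p u k)
      * (qbinom lam p (Suc k) * sinh (u - lam))"
    using qbinom_sinh_pascal[OF assms] by simp
  also have "\<dots> = sinh (u + of_nat n * lam) * f_term n lam p x (u - lam) (Suc k)"
    using assms(2) tail_prod_Suc_top[of "Suc k" p n lam u]
    by (simp add: f_term_def head_prod_Suc_shift[of lam "u - lam"] tail_prod_Suc_Suc algebra_simps)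
  finally show ?thesis .
qed

lemma f_poly_x_Suc:
  assumes nz: "sinh_nonzero_upto lam (Suc p)"
  shows "f_poly_x n lam (Suc p) x u + x * sinh (u + of_nat p * lam) * f_poly_x n lam p x u
    = sinh (u + of_nat n * lam) * f_poly_x n lam p x (u - lam)"
proof -
  have nz_p: "sinh_nonzero_upto lam p" using sinh_nonzero_upto_mono[OF nz] by simp
  define c where
    "c k = (if k \<le> p then sinh (u + of_nat n * lam) * f_term n lam p x (u - lam) k else 0)" for k
  have "(\<Sum>k = 0..Suc p. f_term n lam (Suc p) x u k)
      + (\<Sum>k = 0..p. x * sinh (u + of_nat p * lam) * f_term n lam p x u k)
      = (\<Sum>k = 0..Suc p. c k)"
  proof (rule sum_atLeast0_atMost_Suc_shift_combine)
    show "f_term n lam (Suc p) x u 0 = c 0"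
      using nz nz_p by (simp add: f_term_def c_def qbinom_0_right tail_prod_Suc_top)
  next
    fix k assume "k \<le> p"
    show "f_term n lam (Suc p) x u (Suc k) + x * sinh (u + of_nat p * lam) * f_term n lam p x u k
        = c (Suc k)"
    proof (cases "k = p")
      case True
      then show ?thesis
        using nz nz_p by (simp add: f_term_def c_def qbinom_self head_prod_Suc algebra_simps)
    next
      case False
      with \<open>k \<le> p\<close> show ?thesis
        using f_term_Suc_contiguity[OF nz_p] by (simp add: c_def)
    qed
  qed
  then show ?thesis
    by (simp add: f_poly_x_def c_def sum_distrib_left mult.assoc)
qed

lemma f_term_Suc_shift_contiguity:
  assumes nz: "sinh_nonzero_upto lam (Suc p)" and "k \<le> p"
  shows "sinh (u + (of_nat n - of_nat (Suc p)) * lam) * f_term n lam (Suc p) x u (Suc k)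
      + x * sinh (of_nat (Suc p) * lam) * sinh ((of_nat n - of_nat p) * lam) * f_term n lam p x u k
    = sinh (u + of_nat n * lam) * f_term n lam (Suc p) x (u - lam) (Suc k)"
proof -
  define B where "B = sinh (of_nat (Suc p) * lam) * sinh ((of_nat n - of_nat p) * lam)"
  define T where "T = tail_prod n lam (Suc p) u (Suc k)"
  define S where "S = sinh (u + (of_nat n + of_nat (Suc k) - of_nat (Suc p)) * lam)"
  have "Suc k \<le> Suc p" using \<open>k \<le> p\<close> by simp
  then have "tail_prod n lam (Suc p) (u - lam) (Suc k) * sinh (u + of_nat n * lam) = S * T"
    unfolding S_def T_def
    using tail_prod_Suc_top[of "Suc k" "Suc p" n lam u] tail_prod_Suc_bot[of "Suc k" "Suc p" n lam u]
    by simp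
  then have shifted: "sinh (u + of_nat n * lam) * f_term n lam (Suc p) x (u - lam) (Suc k)
      = (- x) ^ Suc k * qbinom lam (Suc p) (Suc k) * sinh (u - lam) * head_prod lam u k * (S * T)"
    by (simp add: f_term_def head_prod_Suc_shift[of lam "u - lam"] ac_simps)
  have absorb: "qbinom lam (Suc p) (Suc k)
      * (sinh (u + (of_nat n - of_nat (Suc p)) * lam) * sinh (u + of_nat k * lam))
      = B * qbinom lam p k + qbinom lam (Suc p) (Suc k) * (sinh (u - lam) * S)"
    using qbinom_sinh_absorb[OF nz \<open>k \<le> p\<close>, where n = n and u = u] unfolding B_def S_def
    by (simp add: algebra_simps)
  have "sinh (u + (of_nat n - of_nat (Suc p)) * lam) * f_term n lam (Suc p) x u (Suc k)
      + x * B * f_term n lam p x u k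
      = (- x) ^ Suc k * head_prod lam u k * T * (qbinom lam (Suc p) (Suc k)
          * (sinh (u + (of_nat n - of_nat (Suc p)) * lam) * sinh (u + of_nat k * lam)))
        + (- x) ^ k * x * head_prod lam u k * T * (B * qbinom lam p k)"
    unfolding T_def by (simp add: f_term_def head_prod_Suc tail_prod_Suc_Suc algebra_simps)
  also have "\<dots> = (- x) ^ Suc k * head_prod lam u k * T
          * (B * qbinom lam p k + qbinom lam (Suc p) (Suc k) * (sinh (u - lam) * S))
        + (- x) ^ k * x * head_prod lam u k * T * (B * qbinom lam p k)"
    unfolding absorb ..
  also have "\<dots> = sinh (u + of_nat n * lam) * f_term n lam (Suc p) x (u - lam) (Suc k)"
    unfolding shifted by (simp add: algebra_simps)
  finally show ?thesis unfolding B_def by (simp add: mult.assoc)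
qed

lemma f_poly_x_Suc_shift:
  assumes nz: "sinh_nonzero_upto lam (Suc p)"
  shows "sinh (u + (of_nat n - of_nat (Suc p)) * lam) * f_poly_x n lam (Suc p) x u
      + x * sinh (of_nat (Suc p) * lam) * sinh ((of_nat n - of_nat p) * lam) * f_poly_x n lam p x u
    = sinh (u + of_nat n * lam) * f_poly_x n lam (Suc p) x (u - lam)"
proof -
  have "(\<Sum>k = 0..Suc p. sinh (u + (of_nat n - of_nat (Suc p)) * lam) * f_term n lam (Suc p) x u k)
      + (\<Sum>k = 0..p. x * sinh (of_nat (Suc p) * lam) * sinh ((of_nat n - of_nat p) * lam)
           * f_term n lam p x u k)
      = (\<Sum>k = 0..Suc p. sinh (u + of_nat n * lam) * f_term n lam (Suc p) x (u - lam) k)"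
  proof (rule sum_atLeast0_atMost_Suc_shift_combine)
    show "sinh (u + (of_nat n - of_nat (Suc p)) * lam) * f_term n lam (Suc p) x u 0
        = sinh (u + of_nat n * lam) * f_term n lam (Suc p) x (u - lam) 0"
      using nz tail_prod_Suc_top[of 0 "Suc p" n lam u] tail_prod_Suc_bot[of 0 "Suc p" n lam u]
      by (simp add: f_term_def qbinom_0_right algebra_simps)
  qed (rule f_term_Suc_shift_contiguity[OF nz])
  then show ?thesis
    by (simp only: f_poly_x_def sum_distrib_left mult.assoc)
qed

lemma f_term_diag_Suc:
  assumes nz: "sinh_nonzero_upto lam N" and "k < N" and w: "w = exp lam \<or> w = inverse (exp lam)"
  shows "f_term (Suc N) lam (Suc N) x u (Suc k)
    = sinh (u + of_nat (Suc N) * lam) * f_term N lam N (x * w) u (Suc k)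
      - x / w ^ N * sinh u * f_term N lam N (x * w) (u + lam) k"
proof -
  have "w \<noteq> 0" using w by auto
  moreover have "w ^ N = w ^ k * w ^ (N - k)"
    using \<open>k < N\<close> by (simp flip: power_add)
  ultimately have second: "x / w ^ N * sinh u * f_term N lam N (x * w) (u + lam) k
      = - ((- x) ^ Suc k * (qbinom lam N k / w ^ (N - k)) * head_prod lam u (Suc k)
          * tail_prod (Suc N) lam (Suc N) u (Suc k))"
    unfolding f_term_def minus_mult_power
    by (simp add: head_prod_Suc_shift tail_prod_Suc_diag_Suc field_simps)
  have first: "(- x) ^ Suc k * (w ^ Suc k * qbinom lam N (Suc k)) * head_prod lam u (Suc k)
      * tail_prod (Suc N) lam (Suc N) u (Suc k)
      = sinh (u + of_nat (Suc N) * lam) * f_term N lam N (x * w) u (Suc k)"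
    using \<open>k < N\<close> unfolding f_term_def minus_mult_power
    by (simp add: tail_prod_Suc_diag algebra_simps)
  show ?thesis
    unfolding f_term_def[of "Suc N"] qbinom_pascal[OF nz \<open>k < N\<close> w] first[symmetric] second
    by (simp add: algebra_simps)
qed

lemma f_poly_x_diag_Suc:
  assumes nz: "sinh_nonzero_upto lam (Suc N)" and w: "w = exp lam \<or> w = inverse (exp lam)"
  shows "f_poly_x (Suc N) lam (Suc N) x u
    = sinh (u + of_nat (Suc N) * lam) * f_poly_x N lam N (x * w) u
      - x / w ^ N * sinh u * f_poly_x N lam N (x * w) (u + lam)"
proof -
  have nz_N: "sinh_nonzero_upto lam N" using sinh_nonzero_upto_mono[OF nz] by simp
  define a where
    "a k = (if k \<le> N then sinh (u + of_nat (Suc N) * lam) * f_term N lam N (x * w) u k else 0)"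
    for k
  define b where "b k = - (x / w ^ N * sinh u * f_term N lam N (x * w) (u + lam) k)" for k
  have "(\<Sum>k = 0..Suc N. a k) + (\<Sum>k = 0..N. b k) = (\<Sum>k = 0..Suc N. f_term (Suc N) lam (Suc N) x u k)"
  proof (rule sum_atLeast0_atMost_Suc_shift_combine)
    show "a 0 = f_term (Suc N) lam (Suc N) x u 0"
      using nz nz_N by (simp add: a_def f_term_def qbinom_0_right tail_prod_Suc_diag)
  next
    fix k assume "k \<le> N"
    show "a (Suc k) + b k = f_term (Suc N) lam (Suc N) x u (Suc k)"
    proof (cases "k = N")
      case True
      have "w \<noteq> 0" using w by auto
      with True show ?thesis
        using nz nz_N unfolding a_def b_def f_term_def minus_mult_power
        by (simp add: qbinom_self head_prod_Suc_shift tail_prod_Suc_diag_Suc field_simps)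
    next
      case False
      with \<open>k \<le> N\<close> show ?thesis
        using f_term_diag_Suc[OF nz_N _ w, of k x u] by (simp add: a_def b_def)
    qed
  qed
  then show ?thesis
    by (simp add: f_poly_x_def a_def b_def sum_distrib_left sum_negf)
qed

(* In the next two lemmas the recursion is used with w = exp lam, resp. w = inverse (exp lam),
   so that x * w is again of the form exp ((2 m - n) lam); if f^(n) is a single exponential in u,
   the two terms of the recursion then combine, by sinh_add_exp, into a single exponential. *)
lemma f_poly_x_diag_Suc_exponential:
  assumes nz: "sinh_nonzero_upto lam (Suc n)"
    and c: "\<And>v. f_poly_x n lam n (exp ((2 * of_nat m - of_nat n) * lam)) v
      = c * exp ((of_nat n - 2 * of_nat m) * v)"
  shows "f_poly_x (Suc n) lam (Suc n) (exp ((2 * of_nat m - of_nat (Suc n)) * lam)) u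
    = sinh (of_nat (Suc n) * lam) * c * exp ((of_nat (Suc n) - 2 * of_nat m) * u)"
proof -
  define x where "x = exp ((2 * of_nat m - of_nat (Suc n)) * lam)"
  define E :: "complex \<Rightarrow> complex" where "E v = exp ((of_nat n - 2 * of_nat m) * v)" for v
  have "x * exp lam = exp ((2 * of_nat m - of_nat n) * lam)"
    unfolding x_def by (simp add: exp_add[symmetric] algebra_simps)
  then have c: "f_poly_x n lam n (x * exp lam) v = c * E v" for v
    using c unfolding E_def by simp
  have "x * E lam * exp (of_nat (Suc n) * lam) = exp lam ^ n"
    unfolding x_def E_def exp_of_nat_mult[symmetric]
    by (simp add: exp_add[symmetric] algebra_simps)
  moreover have "E (u + lam) = E u * E lam"
    unfolding E_def by (simp add: exp_add[symmetric] algebra_simps)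
  ultimately have "f_poly_x (Suc n) lam (Suc n) x u
      = c * E u * (sinh (u + of_nat (Suc n) * lam) - sinh u / exp (of_nat (Suc n) * lam))"
    unfolding f_poly_x_diag_Suc[OF nz disjI1[OF refl]] c by (simp add: field_simps)
  also have "\<dots> = c * (E u * exp u) * sinh (of_nat (Suc n) * lam)"
    unfolding sinh_add_exp by simp
  also have "E u * exp u = exp ((of_nat (Suc n) - 2 * of_nat m) * u)"
    unfolding E_def by (simp add: exp_add[symmetric] algebra_simps)
  finally show ?thesis unfolding x_def by simp
qed

lemma f_poly_x_diag_Suc_exponential_top:
  assumes nz: "sinh_nonzero_upto lam (Suc n)"
    and c: "\<And>v. f_poly_x n lam n (exp (of_nat n * lam)) v = c * exp (- (of_nat n * v))"
  shows "f_poly_x (Suc n) lam (Suc n) (exp (of_nat (Suc n) * lam)) u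
    = sinh (of_nat (Suc n) * lam) * c * exp (- (of_nat (Suc n) * u))"
proof -
  define x where "x = exp (of_nat (Suc n) * lam)"
  define E :: "complex \<Rightarrow> complex" where "E v = exp (- (of_nat n * v))" for v
  have "x * inverse (exp lam) = exp (of_nat n * lam)"
    unfolding x_def by (simp add: exp_add field_simps)
  then have c: "f_poly_x n lam n (x * inverse (exp lam)) v = c * E v" for v
    using c unfolding E_def by simp
  have "x / inverse (exp lam) ^ n * E lam = exp (of_nat (Suc n) * lam)"
    unfolding x_def E_def power_inverse exp_of_nat_mult[symmetric]
    by (simp add: exp_minus exp_add field_simps)
  moreover have "E (u + lam) = E u * E lam"
    unfolding E_def by (simp add: exp_add[symmetric] algebra_simps)
  ultimately have "f_poly_x (Suc n) lam (Suc n) x u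
      = c * E u * (sinh (u + of_nat (Suc n) * lam) - exp (of_nat (Suc n) * lam) * sinh u)"
    unfolding f_poly_x_diag_Suc[OF nz disjI2[OF refl]] c by (simp add: field_simps)
  also have "\<dots> = c * (E u / exp u) * sinh (of_nat (Suc n) * lam)"
    unfolding add.commute[of u] sinh_add_exp by simp
  also have "E u / exp u = exp (- (of_nat (Suc n) * u))"
    unfolding E_def by (simp add: exp_minus[symmetric] exp_add[symmetric] divide_inverse algebra_simps)
  finally show ?thesis unfolding x_def by simp
qed

lemma f_poly_x_diag_exponential:
  assumes "sinh_nonzero_upto lam n" "m \<le> n"
  shows "\<exists>c. \<forall>u. f_poly_x n lam n (exp ((2 * of_nat m - of_nat n) * lam)) u
    = c * exp ((of_nat n - 2 * of_nat m) * u)"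
  using assms
proof (induction n arbitrary: m)
  case 0
  then show ?case by (simp add: f_poly_x_def f_term_def qbinom_def qfact_def)
next
  case (Suc n)
  have nz: "sinh_nonzero_upto lam n"
    using sinh_nonzero_upto_mono[OF Suc.prems(1)] by simp
  show ?case
  proof (cases "m \<le> n")
    case True
    then obtain c where "\<And>v. f_poly_x n lam n (exp ((2 * of_nat m - of_nat n) * lam)) v
        = c * exp ((of_nat n - 2 * of_nat m) * v)"
      using Suc.IH[OF nz] by blast
    then show ?thesis
      using f_poly_x_diag_Suc_exponential[OF Suc.prems(1)] by blast
  next
    case False
    then have m: "m = Suc n" using Suc.prems(2) by simp
    obtain c where "\<And>v. f_poly_x n lam n (exp (of_nat n * lam)) v = c * exp (- (of_nat n * v))"
      using Suc.IH[OF nz order.refl] by (auto simp: algebra_simps)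
    moreover have "exp ((2 * of_nat m - of_nat (Suc n)) * lam) = exp (of_nat (Suc n) * lam)"
      and "(of_nat (Suc n) - 2 * of_nat m) * u = - (of_nat (Suc n) * u)" for u :: complex
      unfolding m by (simp_all add: algebra_simps)
    ultimately show ?thesis
      using f_poly_x_diag_Suc_exponential_top[OF Suc.prems(1)] by metis
  qed
qed

lemma f_poly_diag_shift:
  assumes "sinh_nonzero_upto lam n" "m \<le> n"
  shows "f_poly n lam n (of_nat m - of_nat n / 2) (u - lam)
    = exp (2 * lam * (of_nat m - of_nat n / 2)) * f_poly n lam n (of_nat m - of_nat n / 2) u"
proof -
  have x: "2 * lam * (of_nat m - of_nat n / 2) = (2 * of_nat m - of_nat n) * lam"
    by (simp add: algebra_simps)
  obtain c where "\<And>v. f_poly_x n lam n (exp ((2 * of_nat m - of_nat n) * lam)) v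
      = c * exp ((of_nat n - 2 * of_nat m) * v)"
    using f_poly_x_diag_exponential[OF assms] by blast
  then show ?thesis
    unfolding f_poly_eq_f_poly_x x by (simp add: exp_add[symmetric] algebra_simps)
qed

section \<open>Pair propagation\<close>

lemma b_coef_0 [simp]: "b_coef n lam 0 = 0"
  by (simp add: b_coef_def)

lemma b_coef_Suc_self [simp]: "b_coef n lam (Suc n) = 0"
  by (simp add: b_coef_def)

lemma b_coef_mult_self:
  "b_coef n lam j * b_coef n lam j = sinh (of_nat j * lam) * sinh (lam * (of_nat n + 1 - of_nat j))"
  unfolding b_coef_def by (metis power2_csqrt power2_eq_square)

lemma b_coef_nonzero:
  assumes "sinh_nonzero_upto lam n" "j \<in> {1..n}"
  shows "b_coef n lam j \<noteq> 0"
proof -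
  have "sinh (of_nat (n + 1 - j) * lam) \<noteq> 0"
    using assms(2) by (intro sinh_nonzero_uptoD[OF assms(1)]) auto
  then have "sinh (lam * (of_nat n + 1 - of_nat j)) \<noteq> 0"
    using assms(2) by (simp add: algebra_simps)
  moreover have "sinh (of_nat j * lam) \<noteq> 0"
    using assms(2) by (intro sinh_nonzero_uptoD[OF assms(1)]) auto
  ultimately show ?thesis unfolding b_coef_def by simp
qed

locale vertex_pair_propagation =
  fixes n m :: nat and lam u h_in1 h_in2 h_out1 h_out2 :: complex
    and v_in v_out :: "nat \<Rightarrow> complex"
  assumes m_le: "m \<le> n"
    and lam_gen: "sinh_nonzero_upto lam n"
    and f_gen: "\<forall>p \<in> {0..n}. f_poly n lam p (of_nat m - of_nat n / 2) u \<noteq> 0"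
    and hout1_nz: "h_out1 \<noteq> 0"
    and h_in2_def: "h_in2 = h_in1 * h_out2 / h_out1 * exp (2 * lam * (of_nat m - of_nat n / 2))"
    and v_out_def: "\<forall>j \<in> {1..n+1}. v_out j = a_coef n lam u 1 * (h_in1 * v_in j / h_out1)
         * (f_poly n lam (j - 1) (of_nat m - of_nat n / 2) (u - lam)
            / f_poly n lam (j - 1) (of_nat m - of_nat n / 2) u)"
    and v_in_rec: "\<forall>j \<in> {1..n}. v_in (j + 1) = 1 / b_coef n lam j * (v_in j * h_out2 / h_out1)
         * (f_poly n lam j (of_nat m - of_nat n / 2) u
            / f_poly n lam (j - 1) (of_nat m - of_nat n / 2) u)"
begin

abbreviation sigma :: complex where "sigma \<equiv> of_nat m - of_nat n / 2"
abbreviation E :: complex where "E \<equiv> exp (2 * lam * sigma)"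
abbreviation F :: "nat \<Rightarrow> complex" where "F p \<equiv> f_poly n lam p sigma u"
abbreviation G :: "nat \<Rightarrow> complex" where "G p \<equiv> f_poly n lam p sigma (u - lam)"

lemma F_nonzero: "p \<le> n \<Longrightarrow> F p \<noteq> 0"
  using f_gen by auto

lemma v_out_mult_h_out1:
  "j \<in> {1..n+1} \<Longrightarrow>
    v_out j * h_out1 = sinh (u + of_nat n * lam) * h_in1 * v_in j * G (j - 1) / F (j - 1)"
  using v_out_def hout1_nz by (simp add: a_coef_def)

lemma v_in_Suc:
  assumes "i \<in> {1..n}"
  shows "v_in (Suc i) * b_coef n lam i * F (i - 1) = v_in i * (h_out2 / h_out1) * F i"
proof -
  have "i - 1 \<le> n" using assms by auto
  then have "b_coef n lam i \<noteq> 0" "F (i - 1) \<noteq> 0"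
    using b_coef_nonzero[OF lam_gen assms] F_nonzero by simp_all
  then show ?thesis using v_in_rec assms by (simp add: field_simps)
qed

lemma first_equation:
  assumes "j \<in> {1..n+1}"
  shows "a_coef n lam u j * v_in j * h_in1 + b_coef n lam (j - 1) * v_in (j - 1) * h_in2
    = v_out j * h_out1"
proof (cases "j = 1")
  case True
  then show ?thesis
    using v_out_mult_h_out1[OF assms] by (simp add: a_coef_def f_poly_def qbinom_def qfact_def)
next
  case False
  then obtain p where j: "j = Suc (Suc p)" and p: "Suc p \<le> n"
    using assms by (metis atLeastAtMost_iff Suc_eq_plus1 Suc_le_mono le_SucE not0_implies_Suc
        not_one_le_zero)
  have a: "a_coef n lam u j = sinh (u + (of_nat n - of_nat (Suc p)) * lam)"
    unfolding a_coef_def j by (simp add: algebra_simps)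
  have shift: "sinh (u + (of_nat n - of_nat (Suc p)) * lam) * F (Suc p)
      + E * (b_coef n lam (Suc p) * b_coef n lam (Suc p)) * F p
      = sinh (u + of_nat n * lam) * G (Suc p)"
    using f_poly_x_Suc_shift[OF sinh_nonzero_upto_mono[OF lam_gen p], where n = n and x = E]
    unfolding f_poly_eq_f_poly_x b_coef_mult_self by (simp add: algebra_simps)
  have rec: "v_in j * b_coef n lam (Suc p) * F p = v_in (Suc p) * (h_out2 / h_out1) * F (Suc p)"
    using v_in_Suc[of "Suc p"] p unfolding j by simp
  have "F (Suc p) * (v_out j * h_out1) = h_in1 * v_in j * (sinh (u + of_nat n * lam) * G (Suc p))"
    using v_out_mult_h_out1[OF assms] F_nonzero[OF p] unfolding j by simp
  also have "\<dots> = h_in1 * v_in j * (sinh (u + (of_nat n - of_nat (Suc p)) * lam) * F (Suc p)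
      + E * (b_coef n lam (Suc p) * b_coef n lam (Suc p)) * F p)"
    unfolding shift ..
  also have "\<dots> = F (Suc p) * (a_coef n lam u j * v_in j * h_in1)
      + h_in1 * E * b_coef n lam (Suc p) * (v_in j * b_coef n lam (Suc p) * F p)"
    unfolding a by (simp add: algebra_simps)
  also have "\<dots> = F (Suc p)
      * (a_coef n lam u j * v_in j * h_in1 + b_coef n lam (j - 1) * v_in (j - 1) * h_in2)"
    unfolding rec unfolding h_in2_def j by (simp add: algebra_simps)
  finally show ?thesis using F_nonzero[OF p] by simp
qed

lemma second_equation:
  assumes "j \<in> {1..n+1}"
  shows "a_coef n lam u (n + 2 - j) * v_in j * h_in2 + b_coef n lam j * v_in (j + 1) * h_in1
    = v_out j * h_out2"
proof (cases "j = n + 1")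
  case True
  have "G n = E * F n"
    using f_poly_diag_shift[OF lam_gen m_le] by simp
  then show ?thesis
    using v_out_mult_h_out1[OF assms] hout1_nz F_nonzero[of n] unfolding True h_in2_def
    by (simp add: a_coef_def field_simps)
next
  case False
  then obtain p where j: "j = Suc p" and p: "Suc p \<le> n"
    using assms by (metis atLeastAtMost_iff Suc_eq_plus1 le_SucE not0_implies_Suc not_one_le_zero)
  have a: "a_coef n lam u (n + 2 - j) = sinh (u + of_nat p * lam)"
    unfolding a_coef_def j using p by (simp add: algebra_simps)
  have rec: "v_in (j + 1) * b_coef n lam j * F p = v_in j * (h_out2 / h_out1) * F (Suc p)"
    using v_in_Suc[of j] p unfolding j by simp
  have step: "F (Suc p) + E * sinh (u + of_nat p * lam) * F p = sinh (u + of_nat n * lam) * G p"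
    using f_poly_x_Suc[OF sinh_nonzero_upto_mono[OF lam_gen p], where n = n and x = E]
    unfolding f_poly_eq_f_poly_x by (simp add: algebra_simps)
  have "F p * (a_coef n lam u (n + 2 - j) * v_in j * h_in2 + b_coef n lam j * v_in (j + 1) * h_in1)
      = F p * (a_coef n lam u (n + 2 - j) * v_in j * h_in2)
        + h_in1 * (v_in (j + 1) * b_coef n lam j * F p)"
    by (simp add: algebra_simps)
  also have "\<dots>
      = h_out2 / h_out1 * h_in1 * v_in j * (F (Suc p) + E * sinh (u + of_nat p * lam) * F p)"
    unfolding rec unfolding a h_in2_def by (simp add: algebra_simps)
  also have "\<dots> = F p * (v_out j * h_out2)"
    unfolding step using v_out_mult_h_out1[OF assms] F_nonzero[of p] p hout1_nz unfolding j
    by (simp add: field_simps)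
  finally show ?thesis using F_nonzero[of p] p by simp
qed

end

theorem proposition3:
  fixes n m :: nat and lam u :: complex
    and h_in1 h_in2 h_out1 h_out2 :: complex
    and v_in v_out :: "nat \<Rightarrow> complex"
  assumes n_pos: "n \<ge> 1"
    and m_le: "m \<le> n"
    and lam_gen: "\<forall>j \<in> {1..n}. sinh (of_nat j * lam) \<noteq> 0"
    and f_gen: "\<forall>p \<in> {0..n}. f_poly n lam p (of_nat m - of_nat n / 2) u \<noteq> 0"
    and hout1_nz: "h_out1 \<noteq> 0"
    and h_in2_def: "h_in2 = h_in1 * h_out2 / h_out1 * exp (2 * lam * (of_nat m - of_nat n / 2))"
    and v_out_def: "\<forall>j \<in> {1..n+1}. v_out j = a_coef n lam u 1 * (h_in1 * v_in j / h_out1)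
         * (f_poly n lam (j - 1) (of_nat m - of_nat n / 2) (u - lam)
            / f_poly n lam (j - 1) (of_nat m - of_nat n / 2) u)"
    and v_in_rec: "\<forall>j \<in> {1..n}. v_in (j + 1) = 1 / b_coef n lam j * (v_in j * h_out2 / h_out1)
         * (f_poly n lam j (of_nat m - of_nat n / 2) u
            / f_poly n lam (j - 1) (of_nat m - of_nat n / 2) u)"
  shows "\<forall>j \<in> {1..n+1}.
           a_coef n lam u j * v_in j * h_in1 + b_coef n lam (j - 1) * v_in (j - 1) * h_in2
             = v_out j * h_out1
         \<and> a_coef n lam u (n + 2 - j) * v_in j * h_in2 + b_coef n lam j * v_in (j + 1) * h_in1
             = v_out j * h_out2"
proof -
  interpret vertex_pair_propagation n m lam u h_in1 h_in2 h_out1 h_out2 v_in v_out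
    using m_le lam_gen f_gen hout1_nz h_in2_def v_out_def v_in_rec
    by (simp add: vertex_pair_propagation_def sinh_nonzero_upto_def)
  show ?thesis using first_equation second_equation by blast
qed

end
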